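(* Let $X,V$ be independent $\mathbb{R}^d$-valued random vectors, $Y=X+V$, where $P_V$ has a Lebesgue density $f_V\in C_0^k(\mathbb{R}^d;\mathbb{R})$ for some $k\ge0$ and $\varphi_V(\omega)\ne0$ for Lebesgue-a.e. $\omega$. Let $g:\mathbb{R}^d\to\mathbb{R}$ be measurable with $\int|g|\,dP_X<\infty$, and let $f_Y=f_V*P_X$. Then $\mathbb{E}[g(X)\mid Y]$ admits a version given by \[ \theta_V^g(y)=\frac{(\mathscr{T}_{g,V}[f_Y])(y)}{f_Y(y)}\qquad\text{for all }y\text{ with }f_Y(y)>0, \] and this version is $k$-times continuously differentiable on the open set $\{y\in\mathbb{R}^d:f_Y(y)>0\}$.
   Context: $\varphi_V(\omega)=\mathbb{E}[e^{i\omega^\top V}]$. $C_0^k$: $C^k$ functions whose derivatives of order $\le k$ vanish at infinity; $\Xi^k=C_0^k\cap L^1$. $(\tau_xf)(t)=f(t-x)$. For a finite signed Radon measure $\mu$ with $\int|g|\,d|\mu|<\infty$, the Tweedie operator is $\mathscr{T}_{g,V}[f_V*\mu]=\int g(x)\tau_xf_V\,d\mu(x)$ (Bochner integral in $\Xi^k$), which is well defined and satisfies $(\mathscr{T}_{g,V}[f_V*\mu])(y)=\int g(x)f_V(y-x)\,d\mu(x)$. *)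

theory Defs
  imports "HOL-Probability.Probability"
begin

fun pderivs :: "'a::euclidean_space list \<Rightarrow> ('a \<Rightarrow> real) \<Rightarrow> 'a \<Rightarrow> real" where
  "pderivs [] f = f"
| "pderivs (b # bs) f = (\<lambda>x. frechet_derivative (pderivs bs f) (at x) b)"

definition Ck_on :: "nat \<Rightarrow> 'a::euclidean_space set \<Rightarrow> ('a \<Rightarrow> real) \<Rightarrow> bool" where
  "Ck_on k U f \<longleftrightarrow>
     (\<forall>bs. set bs \<subseteq> Basis \<and> length bs \<le> k \<longrightarrow>
        continuous_on U (pderivs bs f) \<and>
        (length bs < k \<longrightarrow> (\<forall>x\<in>U. pderivs bs f differentiable (at x))))"

definition C0k :: "nat \<Rightarrow> ('a::euclidean_space \<Rightarrow> real) \<Rightarrow> bool" where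
  "C0k k f \<longleftrightarrow> Ck_on k UNIV f \<and>
     (\<forall>bs. set bs \<subseteq> Basis \<and> length bs \<le> k \<longrightarrow> (pderivs bs f \<longlongrightarrow> 0) at_infinity)"

definition char_fun :: "'s measure \<Rightarrow> ('s \<Rightarrow> 'a::euclidean_space) \<Rightarrow> 'a \<Rightarrow> complex" where
  "char_fun M V w = (LINT s|M. cis (w \<bullet> V s))"

definition conv_dens :: "('a::euclidean_space \<Rightarrow> real) \<Rightarrow> 'a measure \<Rightarrow> 'a \<Rightarrow> real" where
  "conv_dens fV \<mu> y = (LINT x|\<mu>. fV (y - x))"

text \<open>Tweedie operator T_{g,V}[f_V * mu], evaluated pointwise via its defining identity
  (T_{g,V}[f_V * mu])(y) = int g(x) f_V(y - x) dmu(x).\<close>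
definition tweedie :: "('a::euclidean_space \<Rightarrow> real) \<Rightarrow> ('a \<Rightarrow> real) \<Rightarrow> 'a measure \<Rightarrow> 'a \<Rightarrow> real" where
  "tweedie g fV \<mu> y = (LINT x|\<mu>. g x * fV (y - x))"

end

theory Submission
  imports Defs
begin

(* Since X and V are independent and V has density fV, the pair (X, Y) has density
   fV (y - x) with respect to P_X \<otimes> Lebesgue measure.  By Fubini, every measurable theta with
   theta * f_Y = T_{g,V}[f_Y] satisfies E[g(X) 1_B(Y)] = E[theta(Y) 1_B(Y)], i.e. theta(Y) is a
   version of E[g(X) | Y]; and T vanishes wherever f_Y does, so the quotient T / f_Y (set to 0
   off {f_Y > 0}) is such a theta.  Both f_Y and T are convolutions of fV with finite signed
   measures (P_X and g P_X).  As fV and its derivatives up to order k are bounded, one may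
   differentiate k times under the integral sign, so f_Y and T are C^k, and so is their
   quotient on the open set {f_Y > 0}. *)

section \<open>Partial derivatives and \<open>C\<^sup>k\<close> functions\<close>

definition partial_deriv :: "('a::euclidean_space \<Rightarrow> real) \<Rightarrow> 'a \<Rightarrow> 'a \<Rightarrow> real" where
  "partial_deriv f b = (\<lambda>x. frechet_derivative f (at x) b)"

lemma partial_deriv_eq: "(f has_derivative f') (at x) \<Longrightarrow> partial_deriv f b x = f' b"
  unfolding partial_deriv_def using frechet_derivative_at by metis

lemma pderivs_snoc: "pderivs (bs @ [b]) f = pderivs bs (partial_deriv f b)"
  by (induction bs) (auto simp: partial_deriv_def)

lemma frechet_derivative_eq_sum_partial_deriv:
  fixes f :: "'a::euclidean_space \<Rightarrow> real"
  assumes "f differentiable (at z)"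
  shows "frechet_derivative f (at z) u = (\<Sum>b\<in>Basis. (u \<bullet> b) * partial_deriv f b z)"
proof -
  have "linear (frechet_derivative f (at z))"
    using assms frechet_derivative_works has_derivative_linear by blast
  then have "frechet_derivative f (at z) (\<Sum>b\<in>Basis. (u \<bullet> b) *\<^sub>R b) =
             (\<Sum>b\<in>Basis. (u \<bullet> b) * partial_deriv f b z)"
    by (simp add: linear_sum linear_cmul partial_deriv_def)
  then show ?thesis by (simp add: euclidean_representation)
qed

lemma partial_deriv_transform_within_open:
  assumes "open U" "x \<in> U" "\<And>y. y \<in> U \<Longrightarrow> f y = g y" "f differentiable (at x)"
  shows "partial_deriv g b x = partial_deriv f b x" "g differentiable (at x)"
proof -
  have "(f has_derivative frechet_derivative f (at x)) (at x)"
    using assms(4) frechet_derivative_works by blast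
  then have "(g has_derivative frechet_derivative f (at x)) (at x)"
    by (rule has_derivative_transform_within_open[OF _ assms(1,2)]) (use assms(3) in auto)
  then show "partial_deriv g b x = partial_deriv f b x" "g differentiable (at x)"
    using partial_deriv_eq[of g] unfolding partial_deriv_def differentiable_def by auto
qed

text \<open>A recursive form of \<^const>\<open>Ck_on\<close>, suited to induction on \<open>k\<close>.\<close>
fun Ck_rec_on :: "nat \<Rightarrow> 'a::euclidean_space set \<Rightarrow> ('a \<Rightarrow> real) \<Rightarrow> bool" where
  "Ck_rec_on 0 U f \<longleftrightarrow> continuous_on U f"
| "Ck_rec_on (Suc k) U f \<longleftrightarrow> continuous_on U f \<and> (\<forall>x\<in>U. f differentiable (at x)) \<and>
      (\<forall>b\<in>Basis. Ck_rec_on k U (partial_deriv f b))"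

lemma Ck_rec_on_imp_continuous_on: "Ck_rec_on k U f \<Longrightarrow> continuous_on U f"
  by (cases k) auto

lemma Ck_rec_on_SucD: "Ck_rec_on (Suc k) U f \<Longrightarrow> Ck_rec_on k U f"
  by (induction k arbitrary: f) auto

lemma Ck_rec_on_subset: "Ck_rec_on k V f \<Longrightarrow> U \<subseteq> V \<Longrightarrow> Ck_rec_on k U f"
  by (induction k arbitrary: f) (auto intro: continuous_on_subset)

lemma Ck_rec_on_imp_Ck_on: "Ck_rec_on k U f \<Longrightarrow> Ck_on k U f"
proof (induction k arbitrary: f)
  case 0
  then show ?case by (auto simp: Ck_on_def)
next
  case (Suc k)
  show ?case unfolding Ck_on_def
  proof (intro allI impI)
    fix bs :: "'a list"
    assume bs: "set bs \<subseteq> Basis \<and> length bs \<le> Suc k"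
    show "continuous_on U (pderivs bs f) \<and> (length bs < Suc k \<longrightarrow> (\<forall>x\<in>U. pderivs bs f differentiable at x))"
    proof (cases bs rule: rev_exhaust)
      case Nil
      then show ?thesis using Suc.prems by simp
    next
      case (snoc bs' b)
      then have "Ck_on k U (partial_deriv f b)" using Suc bs by auto
      then show ?thesis using bs snoc unfolding Ck_on_def by (auto simp: pderivs_snoc)
    qed
  qed
qed

lemma Ck_rec_on_cong:
  assumes "open U" "\<And>x. x \<in> U \<Longrightarrow> f x = g x" "Ck_rec_on k U f"
  shows "Ck_rec_on k U g"
  using assms(2,3)
proof (induction k arbitrary: f g)
  case 0
  then show ?case using continuous_on_cong by (metis Ck_rec_on.simps(1))
next
  case (Suc k)
  note transform = partial_deriv_transform_within_open[OF assms(1)]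
  have "Ck_rec_on k U (partial_deriv g b)" if "b \<in> Basis" for b
  proof (rule Suc.IH[of "partial_deriv f b"])
    show "Ck_rec_on k U (partial_deriv f b)" using Suc.prems that by auto
    show "partial_deriv f b x = partial_deriv g b x" if "x \<in> U" for x
      using Suc.prems that transform(1)[of x f g] by auto
  qed
  moreover have "continuous_on U g"
    using Suc.prems continuous_on_cong by (metis Ck_rec_on.simps(2))
  moreover have "g differentiable (at x)" if "x \<in> U" for x
    using Suc.prems that transform(2)[of x f g] by auto
  ultimately show ?case by simp
qed

lemma Ck_rec_on_add:
  assumes "open U"
  shows "Ck_rec_on k U f \<Longrightarrow> Ck_rec_on k U g \<Longrightarrow> Ck_rec_on k U (\<lambda>x. f x + g x)"
proof (induction k arbitrary: f g)
  case 0
  then show ?case by (auto intro: continuous_on_add)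
next
  case (Suc k)
  have "Ck_rec_on k U (partial_deriv (\<lambda>x. f x + g x) b)" if b: "b \<in> Basis" for b
  proof (rule Ck_rec_on_cong[OF assms])
    show "Ck_rec_on k U (\<lambda>x. partial_deriv f b x + partial_deriv g b x)" using Suc b by auto
    fix x assume "x \<in> U"
    then have "((\<lambda>x. f x + g x) has_derivative
        (\<lambda>h. frechet_derivative f (at x) h + frechet_derivative g (at x) h)) (at x)"
      using Suc.prems by (intro has_derivative_add) (auto simp: frechet_derivative_works[symmetric])
    then show "partial_deriv f b x + partial_deriv g b x = partial_deriv (\<lambda>x. f x + g x) b x"
      by (simp add: partial_deriv_eq) (simp add: partial_deriv_def)
  qed
  then show ?case using Suc.prems by (auto intro: continuous_on_add)
qed

lemma Ck_rec_on_minus: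
  assumes "open U"
  shows "Ck_rec_on k U f \<Longrightarrow> Ck_rec_on k U (\<lambda>x. - f x)"
proof (induction k arbitrary: f)
  case 0
  then show ?case by (auto intro: continuous_on_minus)
next
  case (Suc k)
  have "Ck_rec_on k U (partial_deriv (\<lambda>x. - f x) b)" if b: "b \<in> Basis" for b
  proof (rule Ck_rec_on_cong[OF assms])
    show "Ck_rec_on k U (\<lambda>x. - partial_deriv f b x)" using Suc b by auto
    fix x assume "x \<in> U"
    then have "((\<lambda>x. - f x) has_derivative (\<lambda>h. - frechet_derivative f (at x) h)) (at x)"
      using Suc.prems by (intro has_derivative_minus) (auto simp: frechet_derivative_works[symmetric])
    then show "- partial_deriv f b x = partial_deriv (\<lambda>x. - f x) b x"
      by (simp add: partial_deriv_eq) (simp add: partial_deriv_def)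
  qed
  then show ?case using Suc.prems by (auto intro: continuous_on_minus)
qed

lemma Ck_rec_on_mult:
  assumes "open U"
  shows "Ck_rec_on k U f \<Longrightarrow> Ck_rec_on k U g \<Longrightarrow> Ck_rec_on k U (\<lambda>x. f x * g x)"
proof (induction k arbitrary: f g)
  case 0
  then show ?case by (auto intro: continuous_on_mult)
next
  case (Suc k)
  have "Ck_rec_on k U (partial_deriv (\<lambda>x. f x * g x) b)" if b: "b \<in> Basis" for b
  proof (rule Ck_rec_on_cong[OF assms])
    have "Ck_rec_on k U f" "Ck_rec_on k U g" using Suc.prems Ck_rec_on_SucD by blast+
    then show "Ck_rec_on k U (\<lambda>x. f x * partial_deriv g b x + partial_deriv f b x * g x)"
      using Suc b by (intro Ck_rec_on_add[OF assms]) auto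
    fix x assume "x \<in> U"
    then have "((\<lambda>x. f x * g x) has_derivative
        (\<lambda>h. f x * frechet_derivative g (at x) h + frechet_derivative f (at x) h * g x)) (at x)"
      using Suc.prems by (intro has_derivative_mult) (auto simp: frechet_derivative_works[symmetric])
    then show "f x * partial_deriv g b x + partial_deriv f b x * g x = partial_deriv (\<lambda>x. f x * g x) b x"
      by (simp add: partial_deriv_eq) (simp add: partial_deriv_def)
  qed
  then show ?case using Suc.prems by (auto intro: continuous_on_mult)
qed

lemma Ck_rec_on_divide:
  assumes "open U"
  shows "Ck_rec_on k U f \<Longrightarrow> Ck_rec_on k U g \<Longrightarrow> (\<forall>x\<in>U. g x \<noteq> 0) \<Longrightarrow>
    Ck_rec_on k U (\<lambda>x. f x / g x)"
proof (induction k arbitrary: f g)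
  case 0
  then show ?case by (auto intro: continuous_on_divide)
next
  case (Suc k)
  have "Ck_rec_on k U (partial_deriv (\<lambda>x. f x / g x) b)" if b: "b \<in> Basis" for b
  proof (rule Ck_rec_on_cong[OF assms])
    have fg: "Ck_rec_on k U f" "Ck_rec_on k U g" using Suc.prems Ck_rec_on_SucD by blast+
    have "Ck_rec_on k U (\<lambda>x. partial_deriv f b x * g x + - (f x * partial_deriv g b x))"
      using Suc b fg by (intro Ck_rec_on_add[OF assms] Ck_rec_on_minus[OF assms] Ck_rec_on_mult[OF assms]) auto
    moreover have "Ck_rec_on k U (\<lambda>x. g x * g x)" using fg by (intro Ck_rec_on_mult[OF assms])
    ultimately show "Ck_rec_on k U
        (\<lambda>x. (partial_deriv f b x * g x + - (f x * partial_deriv g b x)) / (g x * g x))"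
      using Suc.prems by (intro Suc.IH) auto
    fix x assume "x \<in> U"
    then have "((\<lambda>x. f x / g x) has_derivative (\<lambda>h. - f x * (inverse (g x) *
        frechet_derivative g (at x) h * inverse (g x)) + frechet_derivative f (at x) h / g x)) (at x)"
      using Suc.prems by (intro has_derivative_divide) (auto simp: frechet_derivative_works[symmetric])
    then show "(partial_deriv f b x * g x + - (f x * partial_deriv g b x)) / (g x * g x) =
        partial_deriv (\<lambda>x. f x / g x) b x"
      using Suc.prems \<open>x \<in> U\<close> by (simp add: partial_deriv_eq) (simp add: partial_deriv_def field_simps)
  qed
  then show ?case using Suc.prems by (auto intro!: differentiable_divide continuous_on_divide)
qed

lemma Ck_on_quotient:
  assumes "Ck_rec_on k UNIV p" "Ck_rec_on k UNIV q"
    and "\<And>y. 0 < q y \<Longrightarrow> \<theta> y = p y / q y"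
  shows "Ck_on k {y. 0 < q y} \<theta>"
proof -
  have U: "open {y. 0 < q y}"
    using Ck_rec_on_imp_continuous_on[OF assms(2)] by (intro open_Collect_less) auto
  have "Ck_rec_on k {y. 0 < q y} (\<lambda>y. p y / q y)"
    using Ck_rec_on_subset[OF assms(1)] Ck_rec_on_subset[OF assms(2)]
    by (intro Ck_rec_on_divide[OF U]) auto
  then have "Ck_rec_on k {y. 0 < q y} \<theta>"
    by (rule Ck_rec_on_cong[OF U, rotated]) (simp add: assms(3))
  then show ?thesis by (rule Ck_rec_on_imp_Ck_on)
qed

fun Ck_bdd :: "nat \<Rightarrow> ('a::euclidean_space \<Rightarrow> real) \<Rightarrow> bool" where
  "Ck_bdd 0 h \<longleftrightarrow> continuous_on UNIV h \<and> bounded (range h)"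
| "Ck_bdd (Suc k) h \<longleftrightarrow> continuous_on UNIV h \<and> bounded (range h) \<and> (\<forall>x. h differentiable (at x)) \<and>
      (\<forall>b\<in>Basis. Ck_bdd k (partial_deriv h b))"

lemma Ck_bdd_imp_continuous_bounded: "Ck_bdd k h \<Longrightarrow> continuous_on UNIV h \<and> bounded (range h)"
  by (cases k) auto

lemma bounded_range_if_tendsto_zero_at_infinity:
  fixes f :: "'a::euclidean_space \<Rightarrow> real"
  assumes "continuous_on UNIV f" "(f \<longlongrightarrow> 0) at_infinity"
  shows "bounded (range f)"
proof -
  have "eventually (\<lambda>x. dist (f x) 0 < 1) at_infinity"
    using assms(2) unfolding tendsto_iff by (meson zero_less_one)
  then obtain r where r: "\<And>x. r \<le> norm x \<Longrightarrow> \<bar>f x\<bar> < 1"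
    unfolding eventually_at_infinity by auto
  have "bounded (f ` cball 0 r)"
    using assms(1) by (intro compact_imp_bounded compact_continuous_image) (auto intro: continuous_on_subset)
  then obtain B where B: "\<forall>x\<in>cball 0 r. \<bar>f x\<bar> \<le> B"
    unfolding bounded_iff by auto
  have "\<bar>f x\<bar> \<le> max B 1" for x
  proof (cases "norm x \<le> r")
    case True
    then have "\<bar>f x\<bar> \<le> B" using B by simp
    then show ?thesis by simp
  qed (use r[of x] in auto)
  then show ?thesis unfolding bounded_iff by auto
qed

lemma C0k_partial_deriv:
  assumes "C0k (Suc k) f" "b \<in> Basis"
  shows "C0k k (partial_deriv f b)"
  unfolding C0k_def Ck_on_def
proof (intro conjI allI impI)
  fix bs :: "'a list"
  assume "set bs \<subseteq> Basis \<and> length bs \<le> k"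
  then have "set (bs @ [b]) \<subseteq> Basis \<and> length (bs @ [b]) \<le> Suc k" using assms(2) by auto
  then show "continuous_on UNIV (pderivs bs (partial_deriv f b))"
    and "length bs < k \<Longrightarrow> \<forall>x\<in>UNIV. pderivs bs (partial_deriv f b) differentiable (at x)"
    and "(pderivs bs (partial_deriv f b) \<longlongrightarrow> 0) at_infinity"
    using assms(1) unfolding C0k_def Ck_on_def pderivs_snoc[symmetric] by auto
qed

lemma C0k_imp_Ck_bdd: "C0k k f \<Longrightarrow> Ck_bdd k f"
proof (induction k arbitrary: f)
  case 0
  then show ?case
    unfolding C0k_def Ck_on_def by (auto dest!: spec[of _ "[]"] intro: bounded_range_if_tendsto_zero_at_infinity)
next
  case (Suc k)
  then have "continuous_on UNIV f" "(f \<longlongrightarrow> 0) at_infinity" "\<forall>x. f differentiable (at x)"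
    unfolding C0k_def Ck_on_def by (auto dest!: spec[of _ "[]"])
  moreover have "Ck_bdd k (partial_deriv f b)" if "b \<in> Basis" for b
    using Suc.IH Suc.prems C0k_partial_deriv that by blast
  ultimately show ?case
    using bounded_range_if_tendsto_zero_at_infinity by auto
qed

section \<open>Convolution with a finite signed measure\<close>

lemma abs_frechet_derivative_le:
  fixes h :: "'a::euclidean_space \<Rightarrow> real"
  assumes "h differentiable (at z)" "\<And>b. b \<in> Basis \<Longrightarrow> \<bar>partial_deriv h b z\<bar> \<le> B b"
  shows "\<bar>frechet_derivative h (at z) u\<bar> \<le> (\<Sum>b\<in>Basis. B b) * norm u"
proof -
  have "\<bar>frechet_derivative h (at z) u\<bar> \<le> (\<Sum>b\<in>Basis. \<bar>u \<bullet> b\<bar> * \<bar>partial_deriv h b z\<bar>)"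
    unfolding frechet_derivative_eq_sum_partial_deriv[OF assms(1)] abs_mult[symmetric] by (rule sum_abs)
  also have "\<dots> \<le> (\<Sum>b\<in>Basis. norm u * B b)"
    by (intro sum_mono mult_mono) (auto simp: Basis_le_norm assms(2))
  finally show ?thesis by (simp add: sum_distrib_left mult.commute)
qed

lemma abs_first_order_remainder_le:
  fixes h :: "'a::euclidean_space \<Rightarrow> real"
  assumes "\<And>z. h differentiable (at z)" "\<And>z u. \<bar>frechet_derivative h (at z) u\<bar> \<le> C * norm u"
  shows "\<bar>h (z + u) - h z - frechet_derivative h (at z) u\<bar> \<le> 2 * C * norm u"
proof -
  have "norm (h (z + u) - h z) \<le> C * norm (z + u - z)"
  proof (rule differentiable_bound[of UNIV h "\<lambda>z. frechet_derivative h (at z)"])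
    show "(h has_derivative frechet_derivative h (at x)) (at x within UNIV)" for x
      using assms(1) frechet_derivative_works by auto
    show "onorm (frechet_derivative h (at x)) \<le> C" for x
      by (rule onorm_le) (use assms(2) in auto)
  qed auto
  then show ?thesis using assms(2)[of z u] by simp
qed

lemma integral_remainder_quotient_tendsto_zero:
  fixes R :: "'a \<Rightarrow> 'b::{real_normed_vector, first_countable_topology} \<Rightarrow> real"
  assumes "integrable N w" "\<And>u. (\<lambda>x. R x u) \<in> borel_measurable N" "\<And>x u. \<bar>R x u\<bar> \<le> K * norm u"
    and "\<And>x. ((\<lambda>u. \<bar>R x u\<bar> / norm u) \<longlongrightarrow> 0) (at 0)"
  shows "((\<lambda>u. \<integral>x. \<bar>w x\<bar> * (\<bar>R x u\<bar> / norm u) \<partial>N) \<longlongrightarrow> 0) (at 0)"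
  unfolding tendsto_at_iff_sequentially comp_def
proof (intro allI impI)
  fix U :: "nat \<Rightarrow> 'b"
  assume U0: "\<forall>i. U i \<in> UNIV - {0}" and U: "U \<longlonglongrightarrow> 0"
  have "(\<lambda>i. \<integral>x. \<bar>w x\<bar> * (\<bar>R x (U i)\<bar> / norm (U i)) \<partial>N) \<longlonglongrightarrow> (\<integral>x. 0 \<partial>N)"
  proof (rule integral_dominated_convergence[where w="\<lambda>x. \<bar>w x\<bar> * K"])
    show "(\<lambda>x. \<bar>w x\<bar> * (\<bar>R x (U i)\<bar> / norm (U i))) \<in> borel_measurable N" for i
      using assms(1,2) by measurable
    show "integrable N (\<lambda>x. \<bar>w x\<bar> * K)" using assms(1) by auto
    show "AE x in N. norm (\<bar>w x\<bar> * (\<bar>R x (U i)\<bar> / norm (U i))) \<le> \<bar>w x\<bar> * K" for i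
    proof (rule AE_I2)
      fix x
      have "\<bar>R x (U i)\<bar> / norm (U i) \<le> K"
        using U0 assms(3)[of x "U i"] by (simp add: divide_le_eq)
      then show "norm (\<bar>w x\<bar> * (\<bar>R x (U i)\<bar> / norm (U i))) \<le> \<bar>w x\<bar> * K"
        by (simp add: abs_mult) (metis abs_ge_zero mult_left_mono times_divide_eq_right)
    qed
    show "AE x in N. (\<lambda>i. \<bar>w x\<bar> * (\<bar>R x (U i)\<bar> / norm (U i))) \<longlonglongrightarrow> 0"
      using assms(4) U U0 by (intro AE_I2 tendsto_mult_right_zero)
        (auto simp: tendsto_at_iff_sequentially comp_def)
  qed simp
  then show "(\<lambda>i. \<integral>x. \<bar>w x\<bar> * (\<bar>R x (U i)\<bar> / norm (U i)) \<partial>N) \<longlonglongrightarrow> 0" by simp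
qed

text \<open>The convolution of \<open>h\<close> with the finite signed measure of density \<open>w\<close> w.r.t.\ \<open>N\<close>;
  both \<^const>\<open>conv_dens\<close> and \<^const>\<open>tweedie\<close> are of this form.\<close>
definition conv_weighted :: "'a measure \<Rightarrow> ('a \<Rightarrow> real) \<Rightarrow> ('a::euclidean_space \<Rightarrow> real) \<Rightarrow> 'a \<Rightarrow> real" where
  "conv_weighted N w h y = (\<integral>x. w x * h (y - x) \<partial>N)"

lemma integrable_conv_weighted_integrand:
  fixes h :: "'a::euclidean_space \<Rightarrow> real"
  assumes [measurable_cong]: "sets N = sets borel" and "integrable N w"
    and [measurable]: "h \<in> borel_measurable borel" and "\<And>z. \<bar>h z\<bar> \<le> B"
  shows "integrable N (\<lambda>x. w x * h (y - x))"
proof (rule Bochner_Integration.integrable_bound[where f="\<lambda>x. B * w x"])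
  show "integrable N (\<lambda>x. B * w x)" using assms(2) by auto
  show "(\<lambda>x. w x * h (y - x)) \<in> borel_measurable N" using assms(2) by measurable
  have "\<bar>w x\<bar> * \<bar>h (y - x)\<bar> \<le> \<bar>w x\<bar> * \<bar>B\<bar>" for x
    using assms(4)[of "y - x"] by (intro mult_left_mono) auto
  then show "AE x in N. norm (w x * h (y - x)) \<le> norm (B * w x)"
    by (simp add: abs_mult mult.commute)
qed

lemma continuous_on_conv_weighted:
  fixes h :: "'a::euclidean_space \<Rightarrow> real"
  assumes [measurable_cong]: "sets N = sets borel" and "integrable N w"
    and "continuous_on UNIV h" "bounded (range h)"
  shows "continuous_on UNIV (conv_weighted N w h)"
proof -
  obtain B where B: "\<And>z. \<bar>h z\<bar> \<le> B" using assms(4) unfolding bounded_pos by auto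
  have [measurable]: "h \<in> borel_measurable borel"
    using assms(3) by (rule borel_measurable_continuous_onI)
  have "(conv_weighted N w h \<circ> Y) \<longlonglongrightarrow> conv_weighted N w h y" if Y: "Y \<longlonglongrightarrow> y" for Y y
  proof -
    have "(\<lambda>i. \<integral>x. w x * h (Y i - x) \<partial>N) \<longlonglongrightarrow> (\<integral>x. w x * h (y - x) \<partial>N)"
    proof (rule integral_dominated_convergence[where w="\<lambda>x. \<bar>w x\<bar> * B"])
      show "(\<lambda>x. w x * h (y - x)) \<in> borel_measurable N"
        and "(\<lambda>x. w x * h (Y i - x)) \<in> borel_measurable N" for i
        using assms(2) by measurable
      show "integrable N (\<lambda>x. \<bar>w x\<bar> * B)" using assms(2) by auto
      show "AE x in N. (\<lambda>i. w x * h (Y i - x)) \<longlonglongrightarrow> w x * h (y - x)"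
        using Y assms(3) by (intro AE_I2 tendsto_mult_left isCont_tendsto_compose[where g=h] tendsto_intros)
          (auto simp: continuous_on_eq_continuous_at)
      show "AE x in N. norm (w x * h (Y i - x)) \<le> \<bar>w x\<bar> * B" for i
        using B by (auto simp: abs_mult intro!: mult_left_mono)
    qed
    then show ?thesis by (simp add: conv_weighted_def comp_def)
  qed
  then show ?thesis
    by (simp add: continuous_on_eq_continuous_at continuous_at_sequentially)
qed

text \<open>Differentiation under the integral sign; the bounded partial derivatives make \<open>h\<close>
  Lipschitz, which gives the dominating function for the difference quotients.\<close>
lemma has_derivative_conv_weighted:
  fixes h :: "'a::euclidean_space \<Rightarrow> real"
  assumes N[measurable_cong]: "sets N = sets borel" and w: "integrable N w"
    and hd: "\<And>z. h differentiable (at z)" and hb: "bounded (range h)"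
    and pd: "\<And>b. b \<in> Basis \<Longrightarrow> continuous_on UNIV (partial_deriv h b) \<and> bounded (range (partial_deriv h b))"
  shows "(conv_weighted N w h has_derivative
           (\<lambda>u. \<Sum>b\<in>Basis. (u \<bullet> b) * conv_weighted N w (partial_deriv h b) y)) (at y)"
proof -
  have "\<forall>b\<in>Basis. \<exists>B. \<forall>z. \<bar>partial_deriv h b z\<bar> \<le> B"
    using pd unfolding bounded_pos by fastforce
  then obtain B where B: "\<And>b z. b \<in> Basis \<Longrightarrow> \<bar>partial_deriv h b z\<bar> \<le> B b" by metis
  define C where "C = (\<Sum>b\<in>Basis. B b)"
  have D: "\<bar>frechet_derivative h (at z) u\<bar> \<le> C * norm u" for z u
    unfolding C_def using hd B by (rule abs_frechet_derivative_le)
  have [measurable]: "h \<in> borel_measurable borel"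
    using hd by (intro borel_measurable_continuous_onI differentiable_imp_continuous_on)
      (simp add: differentiable_on_def)
  have [measurable]: "partial_deriv h b \<in> borel_measurable borel" if "b \<in> Basis" for b
    using pd[OF that] by (intro borel_measurable_continuous_onI) simp
  obtain Bh where Bh: "\<And>z. \<bar>h z\<bar> \<le> Bh" using hb unfolding bounded_pos by auto
  have ih: "integrable N (\<lambda>x. w x * h (v - x))" for v
    by (rule integrable_conv_weighted_integrand[OF N w _ Bh]) simp
  have ip: "integrable N (\<lambda>x. w x * partial_deriv h b (v - x))" if "b \<in> Basis" for b v
    by (rule integrable_conv_weighted_integrand[OF N w _ B]) (use that in simp_all)
  define R where "R x u = h (y + u - x) - h (y - x) - (\<Sum>b\<in>Basis. (u \<bullet> b) * partial_deriv h b (y - x))" for x u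
  have R_frechet: "R x u = h ((y - x) + u) - h (y - x) - frechet_derivative h (at (y - x)) u" for x u
    unfolding R_def frechet_derivative_eq_sum_partial_deriv[OF hd] by (simp add: algebra_simps)
  define L where "L u = (\<Sum>b\<in>Basis. (u \<bullet> b) * conv_weighted N w (partial_deriv h b) y)" for u
  have "bounded_linear L" unfolding L_def
    by (intro bounded_linear_sum bounded_linear_compose[OF bounded_linear_mult_left bounded_linear_inner_left])
  have remainder: "conv_weighted N w h (y + u) - conv_weighted N w h y - L u = (\<integral>x. w x * R x u \<partial>N)" for u
  proof -
    have "(\<lambda>x. w x * R x u) = (\<lambda>x. w x * h (y + u - x) - w x * h (y - x) -
            (\<Sum>b\<in>Basis. (u \<bullet> b) * (w x * partial_deriv h b (y - x))))"
      by (auto simp: R_def algebra_simps sum_distrib_left)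
    then show ?thesis
      using ih ip by (simp add: conv_weighted_def L_def integral_diff integrable_sum integral_sum)
  qed
  have quotient_le: "norm (conv_weighted N w h (y + u) - conv_weighted N w h y - L u) / norm u \<le>
        (\<integral>x. \<bar>w x\<bar> * (\<bar>R x u\<bar> / norm u) \<partial>N)" for u
  proof -
    have "norm (conv_weighted N w h (y + u) - conv_weighted N w h y - L u) \<le> (\<integral>x. norm (w x * R x u) \<partial>N)"
      unfolding remainder by (rule integral_norm_bound)
    then have "norm (conv_weighted N w h (y + u) - conv_weighted N w h y - L u) / norm u \<le>
        (\<integral>x. norm (w x * R x u) \<partial>N) / norm u"
      by (rule divide_right_mono) simp
    also have "\<dots> = (\<integral>x. \<bar>w x\<bar> * (\<bar>R x u\<bar> / norm u) \<partial>N)"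
      unfolding integral_divide_zero[symmetric] by (simp add: abs_mult)
    finally show ?thesis .
  qed
  have "((\<lambda>u. \<integral>x. \<bar>w x\<bar> * (\<bar>R x u\<bar> / norm u) \<partial>N) \<longlongrightarrow> 0) (at 0)"
  proof (rule integral_remainder_quotient_tendsto_zero[OF w])
    show "(\<lambda>x. R x u) \<in> borel_measurable N" for u unfolding R_def by measurable
    show "\<bar>R x u\<bar> \<le> 2 * C * norm u" for x u
      unfolding R_frechet using hd D by (rule abs_first_order_remainder_le)
    show "((\<lambda>u. \<bar>R x u\<bar> / norm u) \<longlongrightarrow> 0) (at 0)" for x
      using hd[of "y - x"] unfolding R_frechet frechet_derivative_works has_derivative_at by simp
  qed
  then have "((\<lambda>u. norm (conv_weighted N w h (y + u) - conv_weighted N w h y - L u) / norm u) \<longlongrightarrow> 0) (at 0)"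
    by (rule Lim_null_comparison[rotated]) (use quotient_le in auto)
  then show ?thesis
    using \<open>bounded_linear L\<close> unfolding has_derivative_at L_def by blast
qed

lemma Ck_rec_on_conv_weighted:
  assumes N: "sets N = sets borel" and w: "integrable N w"
  shows "Ck_bdd k h \<Longrightarrow> Ck_rec_on k UNIV (conv_weighted N w h)"
proof (induction k arbitrary: h)
  case 0
  then show ?case using continuous_on_conv_weighted[OF N w] by simp
next
  case (Suc k)
  then have hd: "\<And>z. h differentiable (at z)" and pd: "\<And>b. b \<in> Basis \<Longrightarrow> Ck_bdd k (partial_deriv h b)"
    and hc: "continuous_on UNIV h" "bounded (range h)" by auto
  have D: "(conv_weighted N w h has_derivative
      (\<lambda>u. \<Sum>b\<in>Basis. (u \<bullet> b) * conv_weighted N w (partial_deriv h b) y)) (at y)" for y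
    using has_derivative_conv_weighted[OF N w hd hc(2)] Ck_bdd_imp_continuous_bounded[OF pd] by blast
  have "partial_deriv (conv_weighted N w h) b = conv_weighted N w (partial_deriv h b)" if "b \<in> Basis" for b
  proof
    fix y
    have "(\<Sum>b'\<in>Basis. (b \<bullet> b') * conv_weighted N w (partial_deriv h b') y) = conv_weighted N w (partial_deriv h b) y"
      using that by (simp add: inner_Basis if_distrib[of "\<lambda>t. t * _"] sum.If_cases)
    then show "partial_deriv (conv_weighted N w h) b y = conv_weighted N w (partial_deriv h b) y"
      using partial_deriv_eq[OF D[of y], of b] by simp
  qed
  then show ?case using Suc.IH[OF pd] continuous_on_conv_weighted[OF N w hc] D
    by (auto simp: differentiable_def)
qed

section \<open>Additive noise\<close>

lemma distr_pair_plus_density: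
  fixes P :: "'a::euclidean_space measure" and f :: "'a \<Rightarrow> ennreal"
  assumes sets_P[measurable_cong]: "sets P = sets borel" and [measurable]: "f \<in> borel_measurable borel"
    and "sigma_finite_measure (density lborel f)"
  shows "distr (P \<Otimes>\<^sub>M density lborel f) (borel \<Otimes>\<^sub>M borel) (\<lambda>(x, v). (x, x + v)) =
         density (P \<Otimes>\<^sub>M lborel) (\<lambda>z. f (snd z - fst z))"
    (is "?L = ?R")
proof (rule measure_eqI)
  interpret Q: sigma_finite_measure "density lborel f" by fact
  have "sets (P \<Otimes>\<^sub>M lborel) = sets (borel \<Otimes>\<^sub>M borel)"
    by (rule sets_pair_measure_cong) (auto simp: sets_P)
  then show "sets ?L = sets ?R" by (metis sets_distr sets_density)
  fix A assume "A \<in> sets ?L"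
  then have A[measurable]: "A \<in> sets (borel \<Otimes>\<^sub>M borel)" by simp
  have shift: "(\<integral>\<^sup>+v. f v * indicator A (x, x + v) \<partial>lborel) =
               (\<integral>\<^sup>+y. f (y - x) * indicator A (x, y) \<partial>lborel)" for x
  proof -
    have "(\<integral>\<^sup>+y. f (y - x) * indicator A (x, y) \<partial>lborel) =
          (\<integral>\<^sup>+y. f (y - x) * indicator A (x, y) \<partial>distr lborel borel ((+) x))"
      by (simp add: lborel_distr_plus)
    also have "\<dots> = (\<integral>\<^sup>+v. f (x + v - x) * indicator A (x, x + v) \<partial>lborel)"
      by (subst nn_integral_distr) auto
    finally show ?thesis by simp
  qed
  have "emeasure ?L A = (\<integral>\<^sup>+z. indicator A z \<partial>?L)"
    by (simp add: nn_integral_indicator)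
  also have "\<dots> = (\<integral>\<^sup>+z. indicator A ((\<lambda>(x, v). (x, x + v)) z) \<partial>(P \<Otimes>\<^sub>M density lborel f))"
    by (subst nn_integral_distr) auto
  also have "\<dots> = (\<integral>\<^sup>+x. \<integral>\<^sup>+v. indicator A (x, x + v) \<partial>density lborel f \<partial>P)"
    by (subst Q.nn_integral_fst[symmetric]) auto
  also have "\<dots> = (\<integral>\<^sup>+x. \<integral>\<^sup>+y. f (y - x) * indicator A (x, y) \<partial>lborel \<partial>P)"
    by (simp add: nn_integral_density shift)
  also have "\<dots> = (\<integral>\<^sup>+z. f (snd z - fst z) * indicator A z \<partial>(P \<Otimes>\<^sub>M lborel))"
    by (subst lborel.nn_integral_fst[symmetric]) auto
  also have "\<dots> = emeasure ?R A"
    by (subst emeasure_density) (auto simp: mult.commute)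
  finally show "emeasure ?L A = emeasure ?R A" .
qed

lemma (in finite_measure) sigma_finite_subalgebra_vimage_algebra:
  assumes "f \<in> measurable M N"
  shows "sigma_finite_subalgebra M (vimage_algebra (space M) f N)"
proof -
  have "sets (vimage_algebra (space M) f N) \<subseteq> sets M"
    using assms by (auto simp: sets_vimage_algebra2 measurable_space measurable_sets)
  then have "subalgebra M (vimage_algebra (space M) f N)"
    by (simp add: subalgebra_def)
  then show ?thesis
    by (intro finite_measure_subalgebra_is_sigma_finite)
      (simp add: finite_measure_subalgebra_def finite_measure_subalgebra_axioms_def finite_measure_axioms)
qed

locale additive_noise = prob_space M
  for M :: "'s measure" and X V :: "'s \<Rightarrow> 'd::euclidean_space" and fV :: "'d \<Rightarrow> real" +
  assumes measurable_X[measurable]: "X \<in> borel_measurable M"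
    and measurable_V[measurable]: "V \<in> borel_measurable M"
    and indep_X_V: "indep_var borel X borel V"
    and fV_nonneg: "\<And>x. 0 \<le> fV x"
    and distributed_V: "distributed M lborel V (\<lambda>x. ennreal (fV x))"
    and measurable_fV[measurable]: "fV \<in> borel_measurable borel"
    and bounded_fV: "bounded (range fV)"
    \<comment> \<open>makes each \<open>fV (y - _)\<close> integrable, so \<^const>\<open>conv_dens\<close> is never a junk Bochner integral\<close>
begin

abbreviation PX :: "'d measure" where
  "PX \<equiv> distr M borel X"

lemma prob_space_PX: "prob_space PX"
  by (rule prob_space_distr) simp

lemma distr_signal_observation:
  "distr M (borel \<Otimes>\<^sub>M borel) (\<lambda>s. (X s, X s + V s)) =
   density (PX \<Otimes>\<^sub>M lborel) (\<lambda>z. ennreal (fV (snd z - fst z)))"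
proof -
  have PV: "distr M borel V = density lborel (\<lambda>x. ennreal (fV x))"
    using distributed_distr_eq_density[OF distributed_V] by (metis distr_cong sets_lborel)
  have "prob_space (density lborel (\<lambda>x. ennreal (fV x)))"
    unfolding PV[symmetric] by (rule prob_space_distr) simp
  then have sf: "sigma_finite_measure (density lborel (\<lambda>x. ennreal (fV x)))"
    by (simp add: prob_space_imp_sigma_finite)
  have "distr M (borel \<Otimes>\<^sub>M borel) (\<lambda>s. (X s, X s + V s)) =
        distr (distr M (borel \<Otimes>\<^sub>M borel) (\<lambda>s. (X s, V s))) (borel \<Otimes>\<^sub>M borel) (\<lambda>(x, v). (x, x + v))"
    by (subst distr_distr) (auto simp: comp_def)
  also have "\<dots> = distr (PX \<Otimes>\<^sub>M density lborel (\<lambda>x. ennreal (fV x))) (borel \<Otimes>\<^sub>M borel) (\<lambda>(x, v). (x, x + v))"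
    using indep_X_V unfolding indep_var_distribution_eq PV by simp
  also have "\<dots> = density (PX \<Otimes>\<^sub>M lborel) (\<lambda>z. ennreal (fV (snd z - fst z)))"
    by (rule distr_pair_plus_density[OF _ _ sf]) simp_all
  finally show ?thesis .
qed

lemma
  assumes [measurable]: "case_prod H \<in> borel_measurable (borel \<Otimes>\<^sub>M borel)"
  shows integrable_signal_observation_iff:
      "integrable M (\<lambda>s. H (X s) (X s + V s)) \<longleftrightarrow>
       integrable (PX \<Otimes>\<^sub>M lborel) (\<lambda>(x, y). fV (y - x) * H x y)"
    and integral_signal_observation:
      "(\<integral>s. H (X s) (X s + V s) \<partial>M) = integral\<^sup>L (PX \<Otimes>\<^sub>M lborel) (\<lambda>(x, y). fV (y - x) * H x y)"
proof -
  have pair: "(\<lambda>s. (X s, X s + V s)) \<in> M \<rightarrow>\<^sub>M borel \<Otimes>\<^sub>M borel" by measurable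
  have [measurable]: "case_prod H \<in> borel_measurable (PX \<Otimes>\<^sub>M lborel)"
    and [measurable]: "(\<lambda>z. fV (snd z - fst z)) \<in> borel_measurable (PX \<Otimes>\<^sub>M lborel)" by measurable
  show "integrable M (\<lambda>s. H (X s) (X s + V s)) \<longleftrightarrow>
       integrable (PX \<Otimes>\<^sub>M lborel) (\<lambda>(x, y). fV (y - x) * H x y)"
    using integrable_distr_eq[OF pair, of "case_prod H"] fV_nonneg
    by (simp add: distr_signal_observation integrable_density split_beta')
  show "(\<integral>s. H (X s) (X s + V s) \<partial>M) = integral\<^sup>L (PX \<Otimes>\<^sub>M lborel) (\<lambda>(x, y). fV (y - x) * H x y)"
    using integral_distr[OF pair, of "case_prod H"] fV_nonneg
    by (simp add: distr_signal_observation integral_density split_beta')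
qed

lemma integral_signal_observation_iterated:
  assumes "case_prod H \<in> borel_measurable (borel \<Otimes>\<^sub>M borel)"
    and "integrable M (\<lambda>s. H (X s) (X s + V s))"
  shows "(\<integral>s. H (X s) (X s + V s) \<partial>M) = (\<integral>y. \<integral>x. fV (y - x) * H x y \<partial>PX \<partial>lborel)"
proof -
  interpret PX: prob_space PX by (rule prob_space_PX)
  interpret pair_sigma_finite PX lborel ..
  show ?thesis
    using assms integral_snd[of "\<lambda>x y. fV (y - x) * H x y"]
    by (simp add: integral_signal_observation integrable_signal_observation_iff)
qed

lemma integrable_fV_shift: "integrable PX (\<lambda>x. fV (y - x))"
proof -
  interpret PX: prob_space PX by (rule prob_space_PX)
  obtain B where "\<And>z. \<bar>fV z\<bar> \<le> B" using bounded_fV unfolding bounded_pos by auto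
  then show ?thesis
    using integrable_conv_weighted_integrand[of PX "\<lambda>_. 1" fV B y] by simp
qed

lemma conv_dens_nonneg: "0 \<le> conv_dens fV PX y"
  unfolding conv_dens_def using fV_nonneg by (simp add: Bochner_Integration.integral_nonneg)

lemma tweedie_eq_0_if_conv_dens_eq_0:
  assumes "conv_dens fV PX y = 0"
  shows "tweedie g fV PX y = 0"
proof -
  have "AE x in PX. fV (y - x) = 0"
    using assms integral_nonneg_eq_0_iff_AE[OF integrable_fV_shift] fV_nonneg
    by (simp add: conv_dens_def)
  then have "AE x in PX. g x * fV (y - x) = 0" by auto
  then show ?thesis unfolding tweedie_def by (rule integral_eq_zero_AE)
qed

lemma integrable_tweedie:
  assumes [measurable]: "g \<in> borel_measurable borel" and "integrable PX g"
  shows "integrable lborel (tweedie g fV PX)"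
proof -
  interpret PX: prob_space PX by (rule prob_space_PX)
  interpret pair_sigma_finite PX lborel ..
  have "integrable M (\<lambda>s. \<bar>g (X s)\<bar>)"
    using assms(2) by (simp add: integrable_distr_eq)
  then have "integrable (PX \<Otimes>\<^sub>M lborel) (\<lambda>(x, y). fV (y - x) * \<bar>g x\<bar>)"
    using integrable_signal_observation_iff[of "\<lambda>x y. \<bar>g x\<bar>"] by simp
  then have "integrable lborel (\<lambda>y. \<integral>x. fV (y - x) * \<bar>g x\<bar> \<partial>PX)"
    by (rule integrable_snd)
  then show ?thesis
  proof (rule Bochner_Integration.integrable_bound)
    show "tweedie g fV PX \<in> borel_measurable lborel"
      unfolding tweedie_def by (rule PX.borel_measurable_lebesgue_integral) measurable
    have "\<bar>tweedie g fV PX y\<bar> \<le> (\<integral>x. fV (y - x) * \<bar>g x\<bar> \<partial>PX)" for y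
    proof -
      have "\<bar>tweedie g fV PX y\<bar> \<le> (\<integral>x. \<bar>g x * fV (y - x)\<bar> \<partial>PX)"
        unfolding tweedie_def by (rule integral_abs_bound)
      also have "\<dots> = (\<integral>x. fV (y - x) * \<bar>g x\<bar> \<partial>PX)"
        using fV_nonneg by (simp add: abs_mult mult.commute)
      finally show ?thesis .
    qed
    then show "AE y in lborel. norm (tweedie g fV PX y) \<le> norm (\<integral>x. fV (y - x) * \<bar>g x\<bar> \<partial>PX)"
      by (auto intro: order_trans[OF _ abs_ge_self])
  qed
qed

lemma integrable_comp_observation:
  assumes "g \<in> borel_measurable borel" "integrable PX g"
    and [measurable]: "\<theta> \<in> borel_measurable borel"
    and \<theta>: "\<And>y. \<theta> y * conv_dens fV PX y = tweedie g fV PX y"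
  shows "integrable M (\<lambda>s. \<theta> (X s + V s))"
proof -
  interpret PX: prob_space PX by (rule prob_space_PX)
  interpret pair_sigma_finite lborel PX ..
  have norm_inner: "(\<integral>x. norm (fV (y - x) * \<theta> y) \<partial>PX) = \<bar>tweedie g fV PX y\<bar>" for y
  proof -
    have "(\<integral>x. norm (fV (y - x) * \<theta> y) \<partial>PX) = \<bar>\<theta> y\<bar> * conv_dens fV PX y"
      using fV_nonneg by (simp add: conv_dens_def abs_mult mult.commute)
    also have "\<dots> = \<bar>tweedie g fV PX y\<bar>"
      using \<theta>[of y] conv_dens_nonneg[of y] by (metis abs_mult abs_of_nonneg)
    finally show ?thesis .
  qed
  have "integrable (lborel \<Otimes>\<^sub>M PX) (\<lambda>(y, x). fV (y - x) * \<theta> y)"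
  proof (rule Fubini_integrable)
    show "(\<lambda>(y, x). fV (y - x) * \<theta> y) \<in> borel_measurable (lborel \<Otimes>\<^sub>M PX)" by measurable
    have "integrable lborel (\<lambda>y. \<integral>x. norm (fV (y - x) * \<theta> y) \<partial>PX)"
      unfolding norm_inner by (rule integrable_abs[OF integrable_tweedie[OF assms(1,2)]])
    then show "integrable lborel (\<lambda>y. \<integral>x. norm ((\<lambda>(y, x). fV (y - x) * \<theta> y) (y, x)) \<partial>PX)"
      by simp
    show "AE y in lborel. integrable PX (\<lambda>x. (\<lambda>(y, x). fV (y - x) * \<theta> y) (y, x))"
      using integrable_fV_shift by simp
  qed
  from integrable_product_swap[OF this]
  have "integrable (PX \<Otimes>\<^sub>M lborel) (\<lambda>(x, y). fV (y - x) * \<theta> y)"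
    by simp
  then show ?thesis
    using integrable_signal_observation_iff[of "\<lambda>x y. \<theta> y"] by simp
qed

lemma real_cond_exp_observation:
  assumes [measurable]: "g \<in> borel_measurable borel" and "integrable PX g"
    and [measurable]: "\<theta> \<in> borel_measurable borel"
    and \<theta>: "\<And>y. \<theta> y * conv_dens fV PX y = tweedie g fV PX y"
  shows "AE s in M. real_cond_exp M (vimage_algebra (space M) (\<lambda>s. X s + V s) borel) (\<lambda>s. g (X s)) s
           = \<theta> (X s + V s)"
proof (rule sigma_finite_subalgebra.real_cond_exp_charact)
  have Y: "(\<lambda>s. X s + V s) \<in> space M \<rightarrow> space borel" by simp
  show "sigma_finite_subalgebra M (vimage_algebra (space M) (\<lambda>s. X s + V s) borel)"
    by (rule sigma_finite_subalgebra_vimage_algebra) simp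
  show g_int: "integrable M (\<lambda>s. g (X s))"
    using assms(2) by (simp add: integrable_distr_eq)
  show \<theta>_int: "integrable M (\<lambda>s. \<theta> (X s + V s))"
    using integrable_comp_observation[OF assms] .
  show "(\<lambda>s. \<theta> (X s + V s)) \<in> borel_measurable (vimage_algebra (space M) (\<lambda>s. X s + V s) borel)"
    using measurable_compose[OF measurable_vimage_algebra1[OF Y] assms(3)] by simp
  fix A assume "A \<in> sets (vimage_algebra (space M) (\<lambda>s. X s + V s) borel)"
  then obtain B where [measurable]: "B \<in> sets borel" and A: "A = (\<lambda>s. X s + V s) -` B \<inter> space M"
    by (auto simp: sets_vimage_algebra2[OF Y])
  have set_integral_A: "(\<integral>s\<in>A. f s \<partial>M) = (\<integral>s. indicator B (X s + V s) * f s \<partial>M)"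
    for f :: "'s \<Rightarrow> real"
    unfolding set_lebesgue_integral_def A by (rule Bochner_Integration.integral_cong) (auto simp: indicator_def)
  have "integrable M (\<lambda>s. indicator B (X s + V s) * g (X s))"
    by (rule Bochner_Integration.integrable_bound[OF g_int]) (auto simp: indicator_def)
  then have g_side: "(\<integral>s\<in>A. g (X s) \<partial>M) = (\<integral>y. \<integral>x. fV (y - x) * (indicator B y * g x) \<partial>PX \<partial>lborel)"
    unfolding set_integral_A by (rule integral_signal_observation_iterated[rotated]) measurable
  have "integrable M (\<lambda>s. indicator B (X s + V s) * \<theta> (X s + V s))"
    by (rule Bochner_Integration.integrable_bound[OF \<theta>_int]) (auto simp: indicator_def)
  then have \<theta>_side: "(\<integral>s\<in>A. \<theta> (X s + V s) \<partial>M) =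
      (\<integral>y. \<integral>x. fV (y - x) * (indicator B y * \<theta> y) \<partial>PX \<partial>lborel)"
    unfolding set_integral_A by (rule integral_signal_observation_iterated[rotated]) measurable
  have "(\<integral>x. fV (y - x) * (indicator B y * g x) \<partial>PX) = (\<integral>x. fV (y - x) * (indicator B y * \<theta> y) \<partial>PX)"
    for y
  proof -
    have "(\<integral>x. fV (y - x) * (indicator B y * g x) \<partial>PX) = indicator B y * tweedie g fV PX y"
      unfolding tweedie_def by (simp add: ac_simps flip: integral_mult_right_zero)
    also have "\<dots> = indicator B y * (\<theta> y * conv_dens fV PX y)"
      by (simp only: \<theta>)
    also have "\<dots> = (\<integral>x. fV (y - x) * (indicator B y * \<theta> y) \<partial>PX)"
      unfolding conv_dens_def by (simp add: ac_simps)
    finally show ?thesis .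
  qed
  then show "(\<integral>s\<in>A. g (X s) \<partial>M) = (\<integral>s\<in>A. \<theta> (X s + V s) \<partial>M)"
    unfolding g_side \<theta>_side by simp
qed

end

theorem mainTheorem11:
  fixes M :: "'s measure" and X V :: "'s \<Rightarrow> 'd::euclidean_space"
    and fV g :: "'d \<Rightarrow> real" and k :: nat
  assumes "prob_space M"
    and "X \<in> borel_measurable M" and "V \<in> borel_measurable M"
    and "prob_space.indep_var M borel X borel V"
    and "\<And>x. 0 \<le> fV x"
    and "distributed M lborel V (\<lambda>x. ennreal (fV x))"
    and "C0k k fV"
    and "AE w in lborel. char_fun M V w \<noteq> 0"
    and "g \<in> borel_measurable borel"
    and "integrable (distr M borel X) g"
  shows "\<exists>\<theta> :: 'd \<Rightarrow> real.
           \<theta> \<in> borel_measurable borel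
         \<and> (AE s in M. real_cond_exp M (vimage_algebra (space M) (\<lambda>s. X s + V s) borel)
                         (\<lambda>s. g (X s)) s = \<theta> (X s + V s))
         \<and> (\<forall>y. conv_dens fV (distr M borel X) y > 0 \<longrightarrow>
                \<theta> y = tweedie g fV (distr M borel X) y / conv_dens fV (distr M borel X) y)
         \<and> Ck_on k {y. conv_dens fV (distr M borel X) y > 0} \<theta>"
proof -
  have fV: "Ck_bdd k fV" using assms(7) by (rule C0k_imp_Ck_bdd)
  then have "continuous_on UNIV fV" "bounded (range fV)" using Ck_bdd_imp_continuous_bounded by blast+
  moreover from this(1) have "fV \<in> borel_measurable borel" by (rule borel_measurable_continuous_onI)
  ultimately interpret additive_noise M X V fV
    using assms(1-6) by (simp add: additive_noise_def additive_noise_axioms_def)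
  interpret PX: prob_space PX by (rule prob_space_PX)
  define fY T where "fY = conv_dens fV PX" and "T = tweedie g fV PX"
  have "fY = conv_weighted PX (\<lambda>_. 1) fV" "T = conv_weighted PX g fV"
    by (simp_all add: fun_eq_iff fY_def T_def conv_weighted_def conv_dens_def tweedie_def)
  then have fY_Ck: "Ck_rec_on k UNIV fY" and T_Ck: "Ck_rec_on k UNIV T"
    using Ck_rec_on_conv_weighted[OF _ _ fV] assms(10) by simp_all
  define \<theta> where "\<theta> y = (if 0 < fY y then T y / fY y else 0)" for y
  have [measurable]: "fY \<in> borel_measurable borel" "T \<in> borel_measurable borel"
    using fY_Ck T_Ck by (auto intro: borel_measurable_continuous_onI Ck_rec_on_imp_continuous_on)
  have \<theta>_measurable: "\<theta> \<in> borel_measurable borel"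
    unfolding \<theta>_def by measurable
  have "\<theta> y * conv_dens fV PX y = tweedie g fV PX y" for y
    using conv_dens_nonneg[of y] tweedie_eq_0_if_conv_dens_eq_0[of y g]
    by (auto simp: \<theta>_def fY_def T_def)
  show ?thesis
  proof (intro exI[of _ \<theta>] conjI)
    show "AE s in M. real_cond_exp M (vimage_algebra (space M) (\<lambda>s. X s + V s) borel) (\<lambda>s. g (X s)) s
        = \<theta> (X s + V s)"
      by (rule real_cond_exp_observation) fact+
    show "Ck_on k {y. 0 < conv_dens fV PX y} \<theta>"
      using Ck_on_quotient[OF T_Ck fY_Ck, of \<theta>] by (simp add: \<theta>_def fY_def)
  qed (simp_all add: \<theta>_measurable \<theta>_def fY_def T_def)
qed

end
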